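(* Let $\alpha\in\mathbb{C}$ and let $S_n(x)\sim\left(\left(\frac{e^t-1}{t}\right)^{\alpha},\ \log(1+t)\right)$. Then for $n\ge1$, $$S_n(x)=\sum_{l=0}^{n-1}\binom{n-1}{l}N_l^{(-n)}\,B_{n-l}^{(\alpha)}(x).$$
   Context: For invertible $g(t)$ (nonzero constant term) and delta series $f(t)$ ($f(0)=0$, nonzero coefficient of $t$), the Sheffer sequence $S_n(x)\sim(g(t),f(t))$ is the unique polynomial sequence with $\sum_{k\ge0}S_k(y)\frac{t^k}{k!}=\frac{1}{g(\bar f(t))}e^{y\bar f(t)}$ for all $y\in\mathbb{C}$, where $\bar f$ is the compositional inverse of $f$. Complex powers of series with constant term $1$ are defined by $h^a=\exp(a\log h)$. The Narumi numbers are defined by $\left(\frac{\log(1+t)}{t}\right)^a=\sum_{l\ge0}N_l^{(a)}\frac{t^l}{l!}$. The Bernoulli polynomials of order $\alpha$ are defined by $\left(\frac{t}{e^t-1}\right)^{\alpha} e^{xt}=\sum_{n\ge0}B_n^{(\alpha)}(x)\frac{t^n}{n!}$. *)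

theory Defs
  imports "HOL-Computational_Algebra.Computational_Algebra"
begin

definition fps_log1 :: "complex fps \<Rightarrow> complex fps" where
  "fps_log1 h = fps_ln 1 oo (h - 1)"

definition fps_cpow :: "complex fps \<Rightarrow> complex \<Rightarrow> complex fps" where
  "fps_cpow h a = fps_exp 1 oo (fps_const a * fps_log1 h)"

text \<open>Sheffer sequence S ~ (g, f): g invertible, f a delta series, and for every y
  the exponential generating function of S_k(y) equals (1/g(fbar t)) e^(y fbar t),
  where fbar = fps_inv f is the compositional inverse of f.\<close>
definition sheffer :: "complex fps \<Rightarrow> complex fps \<Rightarrow> (nat \<Rightarrow> complex poly) \<Rightarrow> bool" where
  "sheffer g f S \<longleftrightarrow> g $ 0 \<noteq> 0 \<and> f $ 0 = 0 \<and> f $ 1 \<noteq> 0 \<and>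
     (\<forall>y::complex. Abs_fps (\<lambda>k. poly (S k) y / fact k)
        = inverse (g oo fps_inv f) * (fps_exp y oo fps_inv f))"

text \<open>Narumi numbers: (log(1+t)/t)^a = sum N_l^(a) t^l / l!.\<close>
definition narumi :: "complex \<Rightarrow> nat \<Rightarrow> complex" where
  "narumi a l = fact l * (fps_cpow (fps_shift 1 (fps_ln 1)) a) $ l"

text \<open>Bernoulli polynomials of order alpha: (t/(e^t-1))^alpha e^(xt) = sum B_n^(alpha)(x) t^n/n!.\<close>
definition bernoulli_ord :: "complex \<Rightarrow> nat \<Rightarrow> complex \<Rightarrow> complex" where
  "bernoulli_ord \<alpha> n x =
     fact n * (fps_cpow (inverse (fps_shift 1 (fps_exp 1 - 1))) \<alpha> * fps_exp x) $ n"

end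

(*
  The generating function of a Sheffer sequence gives S_n(x) = n! [t^n] H(fbar t) with
  H = e^(xt) / g(t). Lagrange inversion rewrites n [t^n] H(fbar t) as [t^(n-1)] H'(t) (t / f t)^n.
  For f = log(1+t) the factor (t / f t)^n = (log(1+t)/t)^(-n) is the Narumi generating function,
  and H = (t/(e^t-1))^alpha e^(xt) is the generating function of the Bernoulli polynomials of
  order alpha, so the Cauchy product of the two yields the sum. Identities between the complex
  powers h^a = exp(a log h) are obtained from the uniqueness of solutions of F' = a (h'/h) F.
*)
theory Submission
  imports Defs
begin

lemma fps_log1_nth_0 [simp]: "fps_log1 h $ 0 = 0"
  by (simp add: fps_log1_def)

lemma fps_deriv_fps_log1:
  assumes "h $ 0 = 1"
  shows "fps_deriv (fps_log1 h) = fps_deriv h * inverse h"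
proof -
  have h1: "(h - 1) $ 0 = 0" using assms by simp
  have "fps_deriv (fps_log1 h) = (inverse (1 + fps_X) oo (h - 1)) * fps_deriv h"
    unfolding fps_log1_def fps_compose_deriv[OF h1] by (simp add: fps_ln_deriv)
  also have "inverse (1 + fps_X) oo (h - 1) = inverse ((1 + fps_X) oo (h - 1))"
    by (rule fps_inverse_compose[OF h1]) simp
  also have "(1 + fps_X) oo (h - 1) = h"
    using h1 by (simp add: fps_compose_add_distrib)
  finally show ?thesis by (simp add: mult.commute)
qed

lemma fps_cpow_nth_0 [simp]: "fps_cpow h a $ 0 = 1"
  by (simp add: fps_cpow_def)

lemma fps_deriv_fps_cpow:
  assumes "h $ 0 = 1"
  shows "fps_deriv (fps_cpow h a) = fps_const a * fps_deriv h * inverse h * fps_cpow h a"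
proof -
  have "(fps_const a * fps_log1 h) $ 0 = 0" by simp
  from fps_compose_deriv[OF this] show ?thesis
    unfolding fps_cpow_def by (simp add: fps_deriv_fps_log1[OF assms] mult_ac)
qed

lemma fps_linear_ode_unique:
  fixes D E F :: "'a::field_char_0 fps"
  assumes "E $ 0 = F $ 0" "F $ 0 \<noteq> 0"
    and "fps_deriv E = D * E" "fps_deriv F = D * F"
  shows "E = F"
proof -
  define W where "W = E * inverse F"
  have FI: "F * inverse F = 1" using assms(2) by (simp add: inverse_mult_eq_1')
  have "fps_deriv W = D * E * inverse F - D * E * inverse F * (F * inverse F)"
    unfolding W_def using assms by (simp add: fps_inverse_deriv power2_eq_square algebra_simps)
  hence "fps_deriv W = 0" using FI by simp
  hence "W = fps_const (W $ 0)" by simp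
  moreover have "W $ 0 = 1" unfolding W_def using assms by simp
  ultimately have "E * inverse F * F = F" unfolding W_def by simp
  thus ?thesis using FI by (simp add: mult_ac)
qed

lemma fps_cpow_unique:
  assumes "h $ 0 = 1" "F $ 0 = 1"
    and "fps_deriv F = fps_const a * fps_deriv h * inverse h * F"
  shows "F = fps_cpow h a"
proof (rule fps_linear_ode_unique)
  show "fps_deriv (fps_cpow h a) = fps_const a * fps_deriv h * inverse h * fps_cpow h a"
    by (rule fps_deriv_fps_cpow[OF assms(1)])
qed (use assms in simp_all)

lemma fps_cpow_neg_of_nat:
  assumes h0: "h $ 0 = 1"
  shows "fps_cpow h (- of_nat n) = inverse h ^ n"
proof (rule fps_cpow_unique[OF h0, symmetric])
  define P where "P = inverse h"
  show "(P ^ n) $ 0 = 1" unfolding P_def using h0 by (simp add: fps_nth_power_0)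
  have dP: "fps_deriv P = - fps_deriv h * P * P"
    unfolding P_def using h0 by (simp add: fps_inverse_deriv power2_eq_square)
  have "fps_deriv (P ^ n) = of_nat n * fps_deriv P * P ^ (n - 1)"
    by (rule fps_deriv_power')
  also have "\<dots> = - fps_deriv h * P * (of_nat n * (P * P ^ (n - 1)))"
    by (simp add: dP mult_ac)
  also have "of_nat n * (P * P ^ (n - 1)) = of_nat n * P ^ n"
    by (cases n) simp_all
  finally show "fps_deriv (P ^ n) = fps_const (- of_nat n) * fps_deriv h * inverse h * P ^ n"
    unfolding P_def[symmetric] by (simp add: fps_const_neg[symmetric] fps_of_nat mult_ac del: fps_const_neg)
qed

lemma fps_inverse_fps_cpow:
  assumes h0: "h $ 0 = 1"
  shows "inverse (fps_cpow h a) = fps_cpow (inverse h) a"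
proof (rule fps_cpow_unique)
  define C where "C = fps_cpow h a"
  define P where "P = inverse h"
  have C0: "C $ 0 = 1" unfolding C_def by simp
  have CI: "C * inverse C = 1" and hP: "h * P = 1"
    using C0 h0 unfolding P_def by (simp_all add: inverse_mult_eq_1')
  show "P $ 0 = 1" "inverse C $ 0 = 1" unfolding P_def using h0 C0 by simp_all
  have "fps_deriv (inverse C) = - (fps_const a * fps_deriv h * P * C) * (inverse C)\<^sup>2"
    using C0 unfolding C_def P_def by (simp add: fps_inverse_deriv fps_deriv_fps_cpow[OF h0])
  also have "\<dots> = - (fps_const a * fps_deriv h * P * inverse C) * (C * inverse C)"
    by (simp add: power2_eq_square mult_ac)
  also have "\<dots> = - (fps_const a * fps_deriv h * P * inverse C) * (h * P)"
    by (simp only: CI hP)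
  also have "\<dots> = fps_const a * (- fps_deriv h * P\<^sup>2) * h * inverse C"
    by (simp add: power2_eq_square mult_ac)
  also have "\<dots> = fps_const a * fps_deriv P * inverse P * inverse C"
    unfolding P_def using h0 by (simp add: fps_inverse_deriv)
  finally show "fps_deriv (inverse C) = fps_const a * fps_deriv P * inverse P * inverse C" .
qed

lemma fps_nth_inverse_power_deriv_X_mult:
  fixes p :: "'a::field_char_0 fps"
  assumes p0: "p $ 0 \<noteq> 0"
  shows "(inverse p ^ Suc m * fps_deriv (fps_X * p)) $ m = (if m = 0 then 1 else 0)"
proof -
  define P where "P = inverse p"
  define q where "q = P ^ m"
  have pP: "p * P = 1" unfolding P_def using p0 by (simp add: inverse_mult_eq_1')
  define r where "r = fps_deriv p * P ^ Suc m"
  have "P ^ Suc m * fps_deriv (fps_X * p) = q * (p * P) + fps_X * r"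
    unfolding q_def r_def by (simp add: fps_deriv_mult algebra_simps)
  hence split: "P ^ Suc m * fps_deriv (fps_X * p) = q + fps_X * r"
    using pP by simp
  have "fps_deriv q = fps_const (of_nat m) * (- fps_deriv p * P\<^sup>2) * P ^ (m - 1)"
    unfolding q_def P_def using p0 by (simp add: fps_deriv_power fps_inverse_deriv)
  also have "\<dots> = - fps_deriv p * (fps_const (of_nat m) * (P\<^sup>2 * P ^ (m - 1)))"
    by (simp add: algebra_simps)
  also have "fps_const (of_nat m) * (P\<^sup>2 * P ^ (m - 1)) = fps_const (of_nat m) * P ^ Suc m"
    by (cases m) (simp_all add: power2_eq_square)
  also have "- fps_deriv p * \<dots> = fps_const (- of_nat m) * r"
    unfolding r_def by (simp add: algebra_simps fps_const_neg[symmetric] del: fps_const_neg)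
  finally have "fps_X * fps_deriv q = fps_const (- of_nat m) * (fps_X * r)"
    by (simp add: mult.left_commute)
  \<comment> \<open>the derivative \<open>q'\<close> of \<open>p\<^sup>-\<^sup>m\<close> has no residue, because \<open>[t\<^sup>m] t q' = m q\<^sub>m\<close>\<close>
  hence "- of_nat m * (fps_X * r) $ m = of_nat m * q $ m"
    by (metis fps_mult_left_const_nth fps_XD_def fps_XD_nth comp_apply)
  hence "of_nat m * ((fps_X * r) $ m + q $ m) = 0"
    by (simp only: distrib_left add_eq_0_iff) simp
  hence "m \<noteq> 0 \<Longrightarrow> (P ^ Suc m * fps_deriv (fps_X * p)) $ m = 0"
    unfolding split by (simp add: add.commute)
  moreover have "m = 0 \<Longrightarrow> (P ^ Suc m * fps_deriv (fps_X * p)) $ m = 1"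
    unfolding split q_def by simp
  ultimately show ?thesis unfolding P_def by auto
qed

lemma fps_nth_power_deriv_inverse_power:
  fixes p :: "'a::field_char_0 fps"
  assumes p0: "p $ 0 \<noteq> 0" and "k \<le> n"
  shows "((fps_X * p) ^ k * fps_deriv (fps_X * p) * inverse p ^ Suc n) $ n = (if k = n then 1 else 0)"
proof -
  obtain m where n: "n = k + m" using \<open>k \<le> n\<close> le_Suc_ex by blast
  have pP: "p * inverse p = 1" using p0 by (simp add: inverse_mult_eq_1')
  have "p ^ k * inverse p ^ Suc n = (p * inverse p) ^ k * inverse p ^ Suc m"
    unfolding n by (simp add: power_add power_mult_distrib)
  hence "(fps_X * p) ^ k * fps_deriv (fps_X * p) * inverse p ^ Suc n
      = fps_X ^ k * (inverse p ^ Suc m * fps_deriv (fps_X * p))"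
    using pP p0 by (simp add: power_mult_distrib mult_ac)
  hence "((fps_X * p) ^ k * fps_deriv (fps_X * p) * inverse p ^ Suc n) $ n
      = (inverse p ^ Suc m * fps_deriv (fps_X * p)) $ m"
    unfolding n by (simp only: fps_X_power_mult_nth) simp
  thus ?thesis
    unfolding fps_nth_inverse_power_deriv_X_mult[OF p0] n by simp
qed

lemma fps_compose_eq_shift_plus_sum:
  fixes D f :: "'a::idom fps"
  assumes f0: "f $ 0 = 0"
  shows "D oo f = f ^ Suc n * (fps_shift (Suc n) D oo f) + (\<Sum>k = 0..n. fps_const (D $ k) * f ^ k)"
proof -
  define T where "T = (\<Sum>k = 0..n. fps_const (D $ k) * fps_X ^ k)"
  have "fps_cutoff (Suc n) D = T"
    unfolding T_def using fps_poly_sum_fps_X[of n "fps_cutoff (Suc n) D"] by simp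
  hence "D = fps_X ^ Suc n * fps_shift (Suc n) D + T"
    using fps_shift_cutoff'[of "Suc n" D] by simp
  hence "D oo f = (fps_X ^ Suc n * fps_shift (Suc n) D + T) oo f" by simp
  also have "\<dots> = f ^ Suc n * (fps_shift (Suc n) D oo f) + (\<Sum>k = 0..n. fps_const (D $ k) * f ^ k)"
    using f0 unfolding T_def
    by (simp add: fps_compose_add_distrib fps_compose_sum_distrib fps_compose_mult_distrib fps_X_power_compose)
  finally show ?thesis .
qed

lemma fps_deriv_compose_nth_inverse_power:
  fixes f G :: "'a::field_char_0 fps"
  assumes f0: "f $ 0 = 0" and f1: "f $ 1 \<noteq> 0"
  shows "(fps_deriv (G oo f) * inverse (fps_shift 1 f) ^ Suc n) $ n = of_nat (Suc n) * G $ Suc n"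
proof -
  define p where "p = fps_shift 1 f"
  define P where "P = inverse p ^ Suc n"
  define D where "D = fps_deriv G"
  define R where "R = fps_shift (Suc n) D"
  have p0: "p $ 0 \<noteq> 0" using f1 unfolding p_def by simp
  have f_eq: "f = fps_X * p" unfolding p_def using f0 by (intro fps_ext) simp
  have "fps_deriv (G oo f) * P = (D oo f) * (fps_deriv f * P)"
    by (simp add: fps_compose_deriv[OF f0] D_def mult_ac)
  also have "\<dots> = f ^ Suc n * (R oo f) * (fps_deriv f * P)
      + (\<Sum>k = 0..n. fps_const (D $ k) * f ^ k) * (fps_deriv f * P)"
    unfolding R_def fps_compose_eq_shift_plus_sum[OF f0, of D n] by (rule distrib_right)
  also have "f ^ Suc n = fps_X ^ Suc n * p ^ Suc n"
    by (simp add: f_eq power_mult_distrib)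
  \<comment> \<open>the tail \<open>f\<^sup>n\<^sup>+\<^sup>1 (R \<circ> f)\<close> is divisible by \<open>t\<^sup>n\<^sup>+\<^sup>1\<close> and does not reach the coefficient of \<open>t\<^sup>n\<close>\<close>
  finally have "fps_deriv (G oo f) * P = fps_X ^ Suc n * (p ^ Suc n * (R oo f) * fps_deriv f * P)
      + (\<Sum>k = 0..n. fps_const (D $ k) * (f ^ k * fps_deriv f * P))"
    by (simp add: sum_distrib_left sum_distrib_right mult_ac)
  hence "(fps_deriv (G oo f) * P) $ n = (\<Sum>k = 0..n. D $ k * (f ^ k * fps_deriv f * P) $ n)"
    by (simp only: fps_add_nth fps_X_power_mult_nth fps_sum_nth fps_mult_left_const_nth) simp
  also have "\<dots> = (\<Sum>k = 0..n. D $ k * (if k = n then 1 else 0))"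
    unfolding f_eq P_def by (intro sum.cong refl) (subst fps_nth_power_deriv_inverse_power[OF p0]; simp)
  also have "\<dots> = D $ n"
    by (simp add: sum.delta' if_distrib[of "\<lambda>x. _ * x"] cong: if_cong)
  also have "\<dots> = of_nat (Suc n) * G $ Suc n"
    by (simp add: D_def)
  finally show ?thesis unfolding P_def p_def .
qed

theorem fps_lagrange_inversion:
  fixes f H :: "'a::field_char_0 fps"
  assumes f0: "f $ 0 = 0" and f1: "f $ 1 \<noteq> 0"
  shows "of_nat (Suc n) * (H oo fps_inv f) $ Suc n = (fps_deriv H * inverse (fps_shift 1 f) ^ Suc n) $ n"
proof -
  have "(H oo fps_inv f) oo f = H"
    using fps_compose_assoc[OF f0, of "fps_inv f" H] fps_inv[OF f0 f1] by (simp add: fps_inv_def)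
  thus ?thesis using fps_deriv_compose_nth_inverse_power[OF f0 f1, of "H oo fps_inv f" n] by simp
qed

lemma fact_mult_Suc_diff_eq_choose:
  assumes "l \<le> n"
  shows "fact n * (Suc n - l) = (n choose l) * fact l * (fact (Suc n - l) :: nat)"
proof -
  have "Suc n - l = Suc (n - l)" using assms by simp
  thus ?thesis using binomial_fact_lemma[OF assms] by (simp add: algebra_simps)
qed

lemma fact_mult_nth_compose_fps_inv:
  fixes f H :: "'a::field_char_0 fps"
  assumes "f $ 0 = 0" and "f $ 1 \<noteq> 0"
  shows "fact (Suc n) * (H oo fps_inv f) $ Suc n = (\<Sum>l = 0..n. of_nat (n choose l)
      * (fact l * (inverse (fps_shift 1 f) ^ Suc n) $ l) * (fact (Suc n - l) * H $ (Suc n - l)))"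
proof -
  define P where "P = inverse (fps_shift 1 f) ^ Suc n"
  have "fact (Suc n) * (H oo fps_inv f) $ Suc n = fact n * (P * fps_deriv H) $ n"
    using fps_lagrange_inversion[OF assms, of n H] unfolding P_def by (simp add: mult_ac)
  also have "\<dots> = (\<Sum>l = 0..n. (fact n * of_nat (Suc n - l)) * (P $ l * H $ (Suc n - l)))"
    unfolding fps_mult_nth sum_distrib_left
    by (intro sum.cong refl) (simp add: Suc_diff_le mult_ac)
  also have "\<dots> = (\<Sum>l = 0..n. of_nat (n choose l) * (fact l * P $ l) * (fact (Suc n - l) * H $ (Suc n - l)))"
  proof (intro sum.cong refl)
    fix l assume "l \<in> {0..n}"
    hence "(fact n * of_nat (Suc n - l) :: 'a) = of_nat (n choose l) * fact l * fact (Suc n - l)"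
      using fact_mult_Suc_diff_eq_choose[of l n] by (metis atLeastAtMost_iff of_nat_fact of_nat_mult)
    thus "fact n * of_nat (Suc n - l) * (P $ l * H $ (Suc n - l))
        = of_nat (n choose l) * (fact l * P $ l) * (fact (Suc n - l) * H $ (Suc n - l))"
      by (simp add: mult_ac)
  qed
  finally show ?thesis unfolding P_def .
qed

lemma sheffer_poly_eq:
  assumes "sheffer g f S"
  shows "poly (S n) y = fact n * ((inverse g * fps_exp y) oo fps_inv f) $ n"
proof -
  have g0: "g $ 0 \<noteq> 0"
    and egf: "Abs_fps (\<lambda>k. poly (S k) y / fact k) = inverse (g oo fps_inv f) * (fps_exp y oo fps_inv f)"
    using assms unfolding sheffer_def by blast+
  have i0: "fps_inv f $ 0 = 0" by (simp add: fps_inv_def)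
  have "inverse (g oo fps_inv f) * (fps_exp y oo fps_inv f) = (inverse g * fps_exp y) oo fps_inv f"
    by (simp add: fps_inverse_compose[OF i0 g0] fps_compose_mult_distrib[OF i0])
  with egf have "poly (S n) y / fact n = ((inverse g * fps_exp y) oo fps_inv f) $ n"
    by (metis fps_nth_Abs_fps)
  thus ?thesis by (simp add: field_simps)
qed

lemma narumi_neg_of_nat:
  "narumi (- of_nat n) l = fact l * (inverse (fps_shift 1 (fps_ln 1)) ^ n) $ l"
proof -
  have "fps_shift 1 (fps_ln 1) $ 0 = (1::complex)" by (simp add: fps_ln_nth)
  thus ?thesis unfolding narumi_def by (simp add: fps_cpow_neg_of_nat)
qed

lemma bernoulli_ord_eq_nth:
  "bernoulli_ord \<alpha> k x = fact k * (inverse (fps_cpow (fps_shift 1 (fps_exp 1 - 1)) \<alpha>) * fps_exp x) $ k"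
  unfolding bernoulli_ord_def by (simp add: fps_inverse_fps_cpow)

theorem mainTheorem6:
  fixes \<alpha> :: complex and S :: "nat \<Rightarrow> complex poly" and n :: nat and x :: complex
  assumes "sheffer (fps_cpow (fps_shift 1 (fps_exp 1 - 1)) \<alpha>) (fps_ln 1) S"
    and "n \<ge> 1"
  shows "poly (S n) x =
    (\<Sum>l = 0..n-1. of_nat ((n-1) choose l) * narumi (- of_nat n) l * bernoulli_ord \<alpha> (n-l) x)"
proof -
  obtain m where n: "n = Suc m" using \<open>n \<ge> 1\<close> by (cases n) auto
  have "fps_ln 1 $ 0 = (0::complex)" "fps_ln 1 $ 1 \<noteq> (0::complex)"
    by (simp_all add: fps_ln_nth)
  from fact_mult_nth_compose_fps_inv[OF this] sheffer_poly_eq[OF assms(1)]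
  show ?thesis unfolding n narumi_neg_of_nat bernoulli_ord_eq_nth by simp
qed

end
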